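(* Consider the generalized linear model described in the context with a predetermined set of distinct design points $\{\mathbf{x}_1,\ldots,\mathbf{x}_m\}\subset\mathbb{R}^d$, $d\ge1$, and $m>p\ge2$. Then (i) an A-optimal allocation that maximizes $h(\mathbf{w})$, $\mathbf{w}\in S_m$, exists; (ii) the set of A-optimal allocations is convex; and (iii) if $\mathbf{w}_*=(w_1^*,\ldots,w_m^* )^T\in S_m$ satisfies $f(\mathbf{w}_* )>0$, then $\mathbf{w}_*$ is A-optimal among $S_m$ if and only if, for each $i=1,\ldots,m$, $w_i^*$ maximizes $h_i(x)$, $x\in[0,1]$, where $h_i$ is associated with $\mathbf{w}_*$.
   Context: Generalized linear model (GLM): independent responses $Y_i$ from a one-parameter exponential family with $E(Y_i)=\mu_i$ and $\eta_i=g(\mu_i)=\mathbf{q}(\mathbf{x}_i)^T\boldsymbol\beta$, where $g$ is the link function, $\mathbf{q}(\mathbf{x})=(q_1(\mathbf{x}),\ldots,q_p(\mathbf{x}))^T$ are predictor functions, and $\boldsymbol\beta\in\mathbb{R}^p$ is a fixed (assumed) parameter vector. Let $\nu_i=(\partial\mu_i/\partial\eta_i)^2/\mathrm{Var}(Y_i)\ge0$ and $\mathbf{X}=(\mathbf{q}(\mathbf{x}_1),\ldots,\mathbf{q}(\mathbf{x}_m))^T$. Let $S_m=\{\mathbf{w}\in\mathbb{R}^m:w_i\ge0,\sum_iw_i=1\}$, $\mathbf{W}=\mathrm{diag}\{w_1\nu_1,\ldots,w_m\nu_m\}$, $f(\mathbf{w})=|\mathbf{X}^T\mathbf{W}\mathbf{X}|$,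 and $h(\mathbf{w})=[\mathrm{tr}((\mathbf{X}^T\mathbf{W}\mathbf{X})^{-1})]^{-1}$ if $f(\mathbf{w})>0$, $h(\mathbf{w})=0$ otherwise; $\mathbf{w}$ is A-optimal if it maximizes $h$ over $S_m$. For $\mathbf{w}$ and $i$ with $0\le w_i<1$, $h_i(x)=h\big(\tfrac{1-x}{1-w_i}w_1,\ldots,\tfrac{1-x}{1-w_i}w_{i-1},x,\tfrac{1-x}{1-w_i}w_{i+1},\ldots,\tfrac{1-x}{1-w_i}w_m\big)$ for $x\in[0,1]$ (the function $h_i$ "associated with $\mathbf{w}$"). *)

theory Defs
  imports "HOL-Analysis.Analysis"
begin

text \<open>Design index type 'm (m = CARD('m) design points), parameter index type 'p
  (p = CARD('p)), covariate dimension type 'd (d = CARD('d)).\<close>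

definition design_matrix :: "(real^'d \<Rightarrow> real^'p) \<Rightarrow> ('m \<Rightarrow> real^'d) \<Rightarrow> real^'p^'m" where
  "design_matrix q x = (\<chi> i. q (x i))"

definition alloc_simplex :: "(real^'m) set" where
  "alloc_simplex = {w. (\<forall>i. 0 \<le> w $ i) \<and> (\<Sum>i\<in>UNIV. w $ i) = 1}"

definition weight_matrix :: "('m \<Rightarrow> real) \<Rightarrow> real^'m \<Rightarrow> real^'m^'m" where
  "weight_matrix nu w = (\<chi> i j. if i = j then w $ i * nu i else 0)"

definition info_matrix :: "(real^'d \<Rightarrow> real^'p) \<Rightarrow> ('m \<Rightarrow> real^'d) \<Rightarrow> ('m \<Rightarrow> real) \<Rightarrow> real^'m \<Rightarrow> real^'p^'p" where
  "info_matrix q x nu w =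
     transpose (design_matrix q x) ** weight_matrix nu w ** design_matrix q x"

definition f_obj :: "(real^'d \<Rightarrow> real^'p) \<Rightarrow> ('m \<Rightarrow> real^'d) \<Rightarrow> ('m \<Rightarrow> real) \<Rightarrow> real^'m \<Rightarrow> real" where
  "f_obj q x nu w = det (info_matrix q x nu w)"

definition h_obj :: "(real^'d \<Rightarrow> real^'p) \<Rightarrow> ('m \<Rightarrow> real^'d) \<Rightarrow> ('m \<Rightarrow> real) \<Rightarrow> real^'m \<Rightarrow> real" where
  "h_obj q x nu w =
     (if f_obj q x nu w > 0 then inverse (trace (matrix_inv (info_matrix q x nu w))) else 0)"

definition A_optimal :: "(real^'d \<Rightarrow> real^'p) \<Rightarrow> ('m \<Rightarrow> real^'d) \<Rightarrow> ('m \<Rightarrow> real) \<Rightarrow> real^'m \<Rightarrow> bool" where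
  "A_optimal q x nu w \<longleftrightarrow> w \<in> alloc_simplex \<and> (\<forall>v\<in>alloc_simplex. h_obj q x nu v \<le> h_obj q x nu w)"

text \<open>h_i(z) associated with w: coordinate i set to z, the others rescaled by (1-z)/(1-w_i).
  (Only meaningful when w_i < 1.)\<close>
definition h_assoc :: "(real^'d \<Rightarrow> real^'p) \<Rightarrow> ('m \<Rightarrow> real^'d) \<Rightarrow> ('m \<Rightarrow> real) \<Rightarrow> real^'m \<Rightarrow> 'm \<Rightarrow> real \<Rightarrow> real" where
  "h_assoc q x nu w i z =
     h_obj q x nu (\<chi> j. if j = i then z else (1 - z) / (1 - w $ i) * w $ j)"

end

theory Submission
  imports Defs
begin

text \<open>For a positive definite \<open>M\<close>, \<open>1 / tr M\<^sup>-\<^sup>1 = min {tr (A\<^sup>T M A) | tr A = 1}\<close>, the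
  minimum being attained at \<open>A = M\<^sup>-\<^sup>1 / tr M\<^sup>-\<^sup>1\<close>; for a singular positive semidefinite \<open>M\<close>
  the minimum is \<open>0\<close>. As \<open>X\<^sup>T W X\<close> is linear in \<open>w\<close>, \<open>h\<close> is therefore a pointwise minimum of
  linear functions of \<open>w\<close>, attained at every \<open>w\<close>: it is concave and upper semicontinuous,
  which gives (i) on the compact simplex and (ii).

  For (iii), fix \<open>w\<close> with \<open>f(w) > 0\<close> and let \<open>A = M(w)\<^sup>-\<^sup>1 / tr M(w)\<^sup>-\<^sup>1\<close>. Then
  \<open>h(v) \<le> \<Sum>\<^sub>j v\<^sub>j K\<^sub>j\<close> with \<open>K\<^sub>j = \<nu>\<^sub>j |A\<^sup>T q(x\<^sub>j)|\<^sup>2\<close>, so \<open>w\<close> is A-optimal as soon as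
  \<open>K\<^sub>j \<le> h(w)\<close> for all \<open>j\<close>. If instead \<open>K\<^sub>i > h(w)\<close>, the Sherman-Morrison formula shows that
  moving \<open>w\<close> slightly towards the vertex \<open>e\<^sub>i\<close>, which is a move along the curve \<open>h\<^sub>i\<close>,
  strictly increases \<open>h\<close>. Since \<open>p \<ge> 2\<close> forces \<open>w\<^sub>i < 1\<close>, every \<open>h\<^sub>i\<close> is well defined.\<close>

section \<open>Concave maximisation\<close>

definition attained_inf_on :: "'a set \<Rightarrow> 'i set \<Rightarrow> ('i \<Rightarrow> 'a \<Rightarrow> real) \<Rightarrow> ('a \<Rightarrow> real) \<Rightarrow> bool"
  where "attained_inf_on S I g h \<longleftrightarrow> (\<forall>v\<in>S. (\<forall>i\<in>I. h v \<le> g i v) \<and> (\<exists>i\<in>I. g i v = h v))"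

lemma concave_on_attained_inf:
  fixes h :: "'a::real_vector \<Rightarrow> real"
  assumes "convex S" and inf: "attained_inf_on S I g h"
    and concave: "\<And>i. i \<in> I \<Longrightarrow> concave_on S (g i)"
  shows "concave_on S h"
  unfolding concave_on_iff
proof (intro conjI ballI allI impI)
  fix v1 v2 and a b :: real
  assume v: "v1 \<in> S" "v2 \<in> S" and ab: "0 \<le> a" "0 \<le> b" "a + b = 1"
  have le: "h v \<le> g i v" if "i \<in> I" "v \<in> S" for i v
    using inf that unfolding attained_inf_on_def by blast
  have "a *\<^sub>R v1 + b *\<^sub>R v2 \<in> S" using \<open>convex S\<close> v ab convexD by blast
  then obtain i where i: "i \<in> I" "g i (a *\<^sub>R v1 + b *\<^sub>R v2) = h (a *\<^sub>R v1 + b *\<^sub>R v2)"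
    using inf unfolding attained_inf_on_def by blast
  have "a * h v1 + b * h v2 \<le> a * g i v1 + b * g i v2"
    using le[OF i(1) v(1)] le[OF i(1) v(2)] ab by (intro add_mono mult_left_mono) auto
  also have "\<dots> \<le> g i (a *\<^sub>R v1 + b *\<^sub>R v2)"
    using concave[OF i(1)] v ab unfolding concave_on_iff by blast
  finally show "a * h v1 + b * h v2 \<le> h (a *\<^sub>R v1 + b *\<^sub>R v2)" using i(2) by simp
qed (rule \<open>convex S\<close>)

lemma convex_maximizers:
  assumes "concave_on S f"
  shows "convex {w \<in> S. \<forall>v\<in>S. f v \<le> f w}"
  unfolding convex_def
proof (intro ballI allI impI)
  fix w1 w2 and a b :: real
  assume w: "w1 \<in> {w \<in> S. \<forall>v\<in>S. f v \<le> f w}" "w2 \<in> {w \<in> S. \<forall>v\<in>S. f v \<le> f w}"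
    and ab: "0 \<le> a" "0 \<le> b" "a + b = 1"
  have "convex S" using assms concave_on_imp_convex by blast
  then have S: "a *\<^sub>R w1 + b *\<^sub>R w2 \<in> S" using w ab convexD by blast
  have "f w1 = f w2" using w by (auto intro: order_antisym)
  then have "f w1 = a * f w1 + b * f w2" using ab by (metis distrib_right mult_1)
  also have "\<dots> \<le> f (a *\<^sub>R w1 + b *\<^sub>R w2)"
    using assms w ab unfolding concave_on_iff by blast
  finally show "a *\<^sub>R w1 + b *\<^sub>R w2 \<in> {w \<in> S. \<forall>v\<in>S. f v \<le> f w}"
    using w S by force
qed

text \<open>An attained infimum of continuous functions is upper semicontinuous, so its supremum over
  a compact set is attained at any limit point of a maximizing sequence.\<close>
lemma attained_inf_of_continuous_attains_sup:
  fixes h :: "'a::metric_space \<Rightarrow> real"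
  assumes "compact S" "S \<noteq> {}" and inf: "attained_inf_on S I g h"
    and cont: "\<And>i. i \<in> I \<Longrightarrow> continuous_on S (g i)"
  obtains w where "w \<in> S" "\<And>v. v \<in> S \<Longrightarrow> h v \<le> h w"
proof -
  have le: "h v \<le> g i v" if "i \<in> I" "v \<in> S" for i v
    using inf that unfolding attained_inf_on_def by blast
  have attained: "\<exists>i\<in>I. g i v = h v" if "v \<in> S" for v
    using inf that unfolding attained_inf_on_def by blast
  obtain i0 where "i0 \<in> I" using attained \<open>S \<noteq> {}\<close> by blast
  have "bounded (g i0 ` S)"
    using compact_continuous_image[OF cont[OF \<open>i0 \<in> I\<close>] \<open>compact S\<close>] compact_imp_bounded by blast
  then obtain B where "\<And>v. v \<in> S \<Longrightarrow> \<bar>g i0 v\<bar> \<le> B"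
    unfolding bounded_iff by auto
  then have bdd: "bdd_above (h ` S)"
    using le[OF \<open>i0 \<in> I\<close>] by (intro bdd_aboveI2[where M = B]) (meson abs_ge_self order_trans)
  define s where "s = (SUP v\<in>S. h v)"
  have "\<exists>v\<in>S. s - inverse (real (Suc n)) < h v" for n
  proof -
    have "s - inverse (real (Suc n)) < s" by simp
    then show ?thesis using less_cSUP_iff[OF \<open>S \<noteq> {}\<close> bdd] unfolding s_def by blast
  qed
  then obtain f where f: "\<And>n. f n \<in> S" "\<And>n. s - inverse (real (Suc n)) < h (f n)"
    by metis
  obtain l r where l: "l \<in> S" "strict_mono (r :: nat \<Rightarrow> nat)" "(f \<circ> r) \<longlonglongrightarrow> l"
    using \<open>compact S\<close> f(1) unfolding compact_eq_seq_compact_metric seq_compact_def by metis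
  obtain i where i: "i \<in> I" "g i l = h l" using attained[OF l(1)] by blast
  have below: "s - inverse (real (Suc n)) \<le> g i (f (r n))" for n
  proof -
    have "inverse (real (Suc (r n))) \<le> inverse (real (Suc n))"
      using seq_suble[OF l(2), of n] by (intro le_imp_inverse_le) auto
    then show ?thesis using f(2)[of "r n"] le[OF i(1) f(1)[of "r n"]] by linarith
  qed
  have "(\<lambda>n. s - inverse (real (Suc n))) \<longlonglongrightarrow> s"
    using tendsto_diff[OF tendsto_const LIMSEQ_inverse_real_of_nat, of s] by simp
  moreover have "(\<lambda>n. g i (f (r n))) \<longlonglongrightarrow> g i l"
    using f(1)
    by (intro continuous_on_tendsto_compose[OF cont[OF i(1)] l(3)[unfolded comp_def] l(1)]) simp
  ultimately have "s \<le> h l" unfolding i(2)[symmetric] using below by (intro LIMSEQ_le) auto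
  moreover have "h v \<le> s" if "v \<in> S" for v unfolding s_def using cSUP_upper[OF that bdd] .
  ultimately show ?thesis using that l(1) by fastforce
qed

section \<open>Positive definite matrices\<close>

definition pos_semidef :: "real^'n^'n \<Rightarrow> bool" where
  "pos_semidef M \<longleftrightarrow> (\<forall>y. 0 \<le> y \<bullet> (M *v y))"

definition pos_def :: "real^'n^'n \<Rightarrow> bool" where
  "pos_def M \<longleftrightarrow> (\<forall>y. y \<noteq> 0 \<longrightarrow> 0 < y \<bullet> (M *v y))"

lemma matrix_inv_right:
  assumes "invertible A"
  shows "A ** matrix_inv A = mat 1"
  using someI_ex[OF assms[unfolded invertible_def]] unfolding matrix_inv_def by auto

lemma matrix_inv_unique:
  fixes A B :: "'a::field^'n^'n"
  assumes "A ** B = mat 1"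
  shows "matrix_inv A = B"
proof -
  have BA: "B ** A = mat 1" using assms matrix_left_right_inverse by blast
  have "invertible A" using assms invertible_right_inverse by blast
  then have "matrix_inv A = (B ** A) ** matrix_inv A" by (simp add: BA)
  also have "\<dots> = B"
    using matrix_inv_right[OF \<open>invertible A\<close>] by (metis matrix_mul_assoc matrix_mul_rid)
  finally show ?thesis .
qed

lemma matrix_inv_symmetric:
  fixes M :: "real^'n^'n"
  assumes "transpose M = M" "invertible M"
  shows "transpose (matrix_inv M) = matrix_inv M"
proof -
  have "transpose (matrix_inv M) ** M = mat 1"
    by (metis assms matrix_inv_right matrix_transpose_mul transpose_mat)
  then show ?thesis
    using matrix_inv_unique matrix_left_right_inverse by metis
qed

lemma symmetric_matrix_inner:
  fixes M :: "real^'n^'n"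
  assumes "transpose M = M"
  shows "a \<bullet> (M *v c) = (M *v a) \<bullet> c"
  by (metis assms dot_lmul_matrix transpose_matrix_vector)

lemma pos_def_imp_pos_semidef: "pos_def M \<Longrightarrow> pos_semidef M"
  unfolding pos_def_def pos_semidef_def by (metis inner_zero_left order.refl less_imp_le)

lemma pos_def_imp_invertible:
  fixes M :: "real^'n^'n"
  assumes "pos_def M"
  shows "invertible M"
proof -
  have "\<forall>y. M *v y = 0 \<longrightarrow> y = 0"
    using assms unfolding pos_def_def by (metis inner_zero_right less_irrefl)
  then show ?thesis
    using matrix_left_invertible_ker invertible_left_inverse by blast
qed

lemma pos_semidef_kernel:
  fixes M :: "real^'n^'n"
  assumes sym: "transpose M = M" and psd: "pos_semidef M" and y: "y \<bullet> (M *v y) = 0"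
  shows "M *v y = 0"
proof -
  define z where "z = M *v y"
  define a where "a = z \<bullet> (M *v z)"
  have "a \<ge> 0" using psd unfolding pos_semidef_def a_def by blast
  have "z \<bullet> z \<le> e" if "e > 0" for e
  proof -
    define t where "t = 2 * e / (a + 1)"
    have "0 \<le> (y - t *\<^sub>R z) \<bullet> (M *v (y - t *\<^sub>R z))"
      using psd unfolding pos_semidef_def by blast
    also have "\<dots> = t\<^sup>2 * a - 2 * t * (z \<bullet> z)"
      using symmetric_matrix_inner[OF sym, of y z] y
      by (simp add: z_def a_def matrix_vector_mult_diff_distrib matrix_vector_mult_scaleR
          inner_diff_left inner_diff_right power2_eq_square inner_commute algebra_simps)
    finally have "2 * t * (z \<bullet> z) \<le> t * (t * a)" by (simp add: power2_eq_square)
    moreover have "t > 0" using \<open>a \<ge> 0\<close> \<open>e > 0\<close> by (simp add: t_def)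
    ultimately have "2 * (z \<bullet> z) \<le> t * a" by simp
    also have "t * a \<le> 2 * e"
      using \<open>a \<ge> 0\<close> \<open>e > 0\<close> by (simp add: t_def field_simps)
    finally show ?thesis by simp
  qed
  then have "z \<bullet> z \<le> 0" using field_le_epsilon[of "z \<bullet> z" 0] by simp
  then show ?thesis unfolding z_def by (metis inner_ge_zero inner_eq_zero_iff order_antisym)
qed

lemma pos_semidef_invertible_imp_pos_def:
  fixes M :: "real^'n^'n"
  assumes "transpose M = M" "pos_semidef M" "invertible M"
  shows "pos_def M"
  unfolding pos_def_def
proof (intro allI impI)
  fix y :: "real^'n" assume "y \<noteq> 0"
  then have "M *v y \<noteq> 0"
    by (metis assms(3) inj_matrix_vector_mult injD matrix_vector_mult_0_right)
  then have "y \<bullet> (M *v y) \<noteq> 0" using pos_semidef_kernel[OF assms(1,2)] by blast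
  moreover have "0 \<le> y \<bullet> (M *v y)" using assms(2) unfolding pos_semidef_def by blast
  ultimately show "0 < y \<bullet> (M *v y)" by linarith
qed

text \<open>The segment from the identity to a positive definite matrix stays positive definite,
  hence nonsingular, so its determinant cannot change sign.\<close>
lemma pos_def_det_pos:
  fixes M :: "real^'n^'n"
  assumes "pos_def M"
  shows "det M > 0"
proof (rule ccontr)
  assume "\<not> det M > 0"
  define C where "C t = (1 - t) *\<^sub>R (mat 1 :: real^'n^'n) + t *\<^sub>R M" for t :: real
  have "continuous_on {0..1} (\<lambda>t. det (C t))"
    unfolding det_def C_def by (intro continuous_intros)
  moreover have "det (C 0) = 1" "det (C 1) \<le> 0"
    using \<open>\<not> det M > 0\<close> by (simp_all add: C_def)
  ultimately obtain t where t: "0 \<le> t" "t \<le> 1" "det (C t) = 0"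
    using IVT2'[of "\<lambda>t. det (C t)" 1 0 0] by auto
  have "pos_def (C t)" unfolding pos_def_def
  proof (intro allI impI)
    fix y :: "real^'n" assume "y \<noteq> 0"
    have "y \<bullet> (C t *v y) = (1 - t) * (y \<bullet> y) + t * (y \<bullet> (M *v y))"
      by (simp add: C_def matrix_vector_mult_add_rdistrib scaleR_matrix_vector_assoc[symmetric]
          inner_add_right)
    moreover have "0 < y \<bullet> y" "0 < y \<bullet> (M *v y)"
      using \<open>y \<noteq> 0\<close> assms unfolding pos_def_def by auto
    ultimately show "0 < y \<bullet> (C t *v y)"
      using t by (cases "t = 1") (auto intro: add_pos_nonneg)
  qed
  then show False
    using t(3) pos_def_imp_invertible invertible_det_nz by blast
qed

lemma pos_def_matrix_inv:
  fixes M :: "real^'n^'n"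
  assumes "pos_def M"
  shows "pos_def (matrix_inv M)"
  unfolding pos_def_def
proof (intro allI impI)
  fix y :: "real^'n" assume "y \<noteq> 0"
  define z where "z = matrix_inv M *v y"
  have Mz: "M *v z = y"
    using matrix_inv_right[OF pos_def_imp_invertible[OF assms]]
    by (simp add: z_def matrix_vector_mul_assoc)
  then have "z \<noteq> 0" using \<open>y \<noteq> 0\<close> by auto
  then have "0 < z \<bullet> (M *v z)" using assms unfolding pos_def_def by blast
  then show "0 < y \<bullet> (matrix_inv M *v y)"
    by (simp add: Mz z_def[symmetric] inner_commute)
qed

lemma matrix_axis_column_component: "((A::real^'n^'n) *v axis k 1) $ k = A $ k $ k"
  by (simp add: matrix_vector_mult_basis column_def)

lemma pos_def_trace_pos:
  fixes M :: "real^'n^'n"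
  assumes "pos_def M"
  shows "trace M > 0"
proof -
  have "M $ k $ k = axis k 1 \<bullet> (M *v axis k 1)" for k
    by (simp add: inner_axis' matrix_axis_column_component)
  moreover have "axis k 1 \<bullet> (M *v axis k 1) > 0" for k :: 'n
    using assms unfolding pos_def_def by (simp add: axis_eq_0_iff)
  ultimately show ?thesis
    unfolding trace_def by (simp add: sum_pos)
qed

section \<open>A variational formula for the A-criterion\<close>

text \<open>\<open>trace_form M A\<close> is \<open>tr (A\<^sup>T M A)\<close>, summed over the columns of \<open>A\<close>.\<close>
definition trace_form :: "real^'n^'n \<Rightarrow> real^'n^'n \<Rightarrow> real" where
  "trace_form M A = (\<Sum>k\<in>UNIV. (A *v axis k 1) \<bullet> (M *v (A *v axis k 1)))"

text \<open>Expand \<open>0 \<le> (c - a)\<^sup>T M (c - a)\<close> for the \<open>k\<close>-th columns \<open>c\<close> of \<open>A\<close> and \<open>a\<close> of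
  \<open>M\<^sup>-\<^sup>1 / tr M\<^sup>-\<^sup>1\<close>, and sum over \<open>k\<close>.\<close>
lemma inverse_trace_matrix_inv_le_trace_form:
  fixes M A :: "real^'n^'n"
  assumes sym: "transpose M = M" and pd: "pos_def M" and tr: "trace A = 1"
  shows "inverse (trace (matrix_inv M)) \<le> trace_form M A"
proof -
  define P where "P = matrix_inv M"
  define T where "T = trace P"
  have "T > 0" unfolding T_def P_def using pos_def_trace_pos pos_def_matrix_inv pd by blast
  have MP: "M ** P = mat 1"
    unfolding P_def using matrix_inv_right pos_def_imp_invertible pd by blast
  have each: "2 * A$k$k / T - P$k$k / T\<^sup>2 \<le> (A *v axis k 1) \<bullet> (M *v (A *v axis k 1))" for k
  proof -
    define c where "c = A *v axis k 1"
    define a where "a = (1 / T) *\<^sub>R (P *v axis k 1)"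
    have Ma: "M *v a = (1 / T) *\<^sub>R axis k 1"
      by (simp add: a_def matrix_vector_mult_scaleR matrix_vector_mul_assoc MP)
    have "0 \<le> (c - a) \<bullet> (M *v (c - a))"
      using pos_def_imp_pos_semidef[OF pd] unfolding pos_semidef_def by blast
    also have "\<dots> = c \<bullet> (M *v c) - 2 * (c \<bullet> (M *v a)) + a \<bullet> (M *v a)"
      using symmetric_matrix_inner[OF sym, of a c]
      by (simp add: matrix_vector_mult_diff_distrib inner_diff_left inner_diff_right inner_commute)
    also have "c \<bullet> (M *v a) = A$k$k / T"
      by (simp add: Ma c_def inner_axis matrix_axis_column_component)
    also have "a \<bullet> (M *v a) = P$k$k / T\<^sup>2"
      unfolding Ma by (simp add: a_def inner_axis matrix_axis_column_component power2_eq_square)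
    finally show ?thesis unfolding c_def by simp
  qed
  have "inverse T = 2 * trace A / T - trace P / T\<^sup>2"
    using \<open>T > 0\<close> tr by (simp add: T_def field_simps power2_eq_square)
  also have "\<dots> = (\<Sum>k\<in>UNIV. 2 * A$k$k / T - P$k$k / T\<^sup>2)"
    by (simp add: trace_def sum_subtractf sum_divide_distrib sum_distrib_left)
  also have "\<dots> \<le> trace_form M A"
    unfolding trace_form_def by (rule sum_mono) (rule each)
  finally show ?thesis unfolding T_def P_def .
qed

definition normalized_inverse :: "real^'n^'n \<Rightarrow> real^'n^'n" where
  "normalized_inverse M = (1 / trace (matrix_inv M)) *\<^sub>R matrix_inv M"

lemma trace_form_normalized_inverse:
  fixes M :: "real^'n^'n"
  assumes pd: "pos_def M"
  shows "trace (normalized_inverse M) = 1"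
    and "trace_form M (normalized_inverse M) = inverse (trace (matrix_inv M))"
proof -
  define P where "P = matrix_inv M"
  define T where "T = trace P"
  have "T > 0" unfolding T_def P_def using pos_def_trace_pos pos_def_matrix_inv pd by blast
  have MP: "M ** P = mat 1"
    unfolding P_def using matrix_inv_right pos_def_imp_invertible pd by blast
  have A: "normalized_inverse M = (1 / T) *\<^sub>R P" unfolding normalized_inverse_def T_def P_def ..
  show "trace (normalized_inverse M) = 1"
    using \<open>T > 0\<close> by (simp add: A trace_def T_def sum_divide_distrib[symmetric])
  have "(normalized_inverse M *v axis k 1) \<bullet> (M *v (normalized_inverse M *v axis k 1)) =
      P$k$k / T\<^sup>2"
    for k
    by (simp add: A scaleR_matrix_vector_assoc[symmetric] matrix_vector_mult_scaleR
        matrix_vector_mul_assoc MP inner_axis matrix_axis_column_component power2_eq_square)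
  then have "trace_form M (normalized_inverse M) = T / T\<^sup>2"
    by (simp add: trace_form_def trace_def T_def sum_divide_distrib)
  then show "trace_form M (normalized_inverse M) = inverse (trace (matrix_inv M))"
    using \<open>T > 0\<close> by (simp add: T_def P_def power2_eq_square inverse_eq_divide)
qed

lemma singular_trace_form_zero:
  fixes M :: "real^'n^'n"
  assumes "\<not> invertible M"
  obtains A where "trace A = 1" "trace_form M A = 0"
proof -
  obtain v where v: "M *v v = 0" "v \<noteq> 0"
    using assms matrix_left_invertible_ker invertible_left_inverse by blast
  define A :: "real^'n^'n" where "A = (\<chi> a b. v$a * v$b / (v \<bullet> v))"
  have "trace A = (\<Sum>a\<in>UNIV. v$a * v$a) / (v \<bullet> v)"
    unfolding A_def trace_def by (simp add: sum_divide_distrib)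
  also have "(\<Sum>a\<in>UNIV. v$a * v$a) = v \<bullet> v" by (simp add: inner_vec_def)
  finally have "trace A = 1" using v by simp
  moreover have "A *v axis k 1 = (v$k / (v \<bullet> v)) *\<^sub>R v" for k
    by (simp add: matrix_vector_mult_basis A_def column_def vec_eq_iff)
  then have "trace_form M A = 0"
    by (simp add: trace_form_def matrix_vector_mult_scaleR v)
  ultimately show ?thesis using that by blast
qed

section \<open>Rank-one updates\<close>

definition outer_prod :: "real^'n \<Rightarrow> real^'n \<Rightarrow> real^'n^'n" where
  "outer_prod u v = (\<chi> r c. u$r * v$c)"

lemma outer_prod_mult_vec: "outer_prod u v *v y = (v \<bullet> y) *\<^sub>R u"
  by (simp add: outer_prod_def vec_eq_iff matrix_vector_mult_def inner_vec_def
      sum_distrib_left algebra_simps)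

lemma trace_outer_prod: "trace (outer_prod u v) = u \<bullet> v"
  by (simp add: outer_prod_def trace_def inner_vec_def)

lemma trace_scaleR: "trace (c *\<^sub>R A) = c * trace A"
  by (simp add: trace_def sum_distrib_left)

lemma matrix_inv_rank_one_update:
  fixes M :: "real^'n^'n"
  assumes sym: "transpose M = M" and inv: "invertible M" and "\<alpha> \<noteq> 0"
    and D: "\<alpha> + \<beta> * (g \<bullet> (matrix_inv M *v g)) \<noteq> 0"
  defines "u \<equiv> matrix_inv M *v g"
  shows "matrix_inv (\<alpha> *\<^sub>R M + \<beta> *\<^sub>R outer_prod g g) =
    (1 / \<alpha>) *\<^sub>R (matrix_inv M - (\<beta> / (\<alpha> + \<beta> * (g \<bullet> u))) *\<^sub>R outer_prod u u)"
    (is "matrix_inv ?N = ?X")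
proof -
  define \<gamma> where "\<gamma> = \<beta> / (\<alpha> + \<beta> * (g \<bullet> u))"
  define X where "X = (1 / \<alpha>) *\<^sub>R (matrix_inv M - \<gamma> *\<^sub>R outer_prod u u)"
  have MP: "M *v (matrix_inv M *v y) = y" for y
    using matrix_inv_right[OF inv] by (simp add: matrix_vector_mul_assoc)
  have Xy: "X *v y = (1 / \<alpha>) *\<^sub>R (matrix_inv M *v y - (\<gamma> * (u \<bullet> y)) *\<^sub>R u)" for y
    by (simp add: X_def scaleR_matrix_vector_assoc[symmetric] matrix_vector_mult_diff_rdistrib
        outer_prod_mult_vec)
  have MX: "M *v (X *v y) = (1 / \<alpha>) *\<^sub>R (y - (\<gamma> * (u \<bullet> y)) *\<^sub>R g)" for y
    by (simp add: Xy matrix_vector_mult_scaleR matrix_vector_mult_diff_distrib MP u_def)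
  have gX: "g \<bullet> (X *v y) = (1 / \<alpha>) * ((u \<bullet> y) - \<gamma> * (u \<bullet> y) * (g \<bullet> u))" for y
    using symmetric_matrix_inner[OF matrix_inv_symmetric[OF sym inv], of g y]
    by (simp add: Xy inner_diff_right u_def)
  have Nv: "?N *v v = \<alpha> *\<^sub>R (M *v v) + (\<beta> * (g \<bullet> v)) *\<^sub>R g" for v
    by (simp add: matrix_vector_mult_add_rdistrib scaleR_matrix_vector_assoc[symmetric]
        outer_prod_mult_vec)
  have "\<gamma> * (\<alpha> + \<beta> * (g \<bullet> u)) = \<beta>" using D by (simp add: \<gamma>_def u_def)
  moreover have "\<beta> * (1 - \<gamma> * (g \<bullet> u)) / \<alpha> - \<gamma> = (\<beta> - \<gamma> * (\<alpha> + \<beta> * (g \<bullet> u))) / \<alpha>"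
    using \<open>\<alpha> \<noteq> 0\<close> by (simp add: field_simps)
  ultimately have coeff: "\<beta> * (1 - \<gamma> * (g \<bullet> u)) / \<alpha> - \<gamma> = 0" by simp
  have "?N *v (X *v y) = y" for y
  proof -
    have "?N *v (X *v y) = \<alpha> *\<^sub>R (M *v (X *v y)) + (\<beta> * (g \<bullet> (X *v y))) *\<^sub>R g"
      by (rule Nv)
    also have "\<dots> = y + ((u \<bullet> y) * (\<beta> * (1 - \<gamma> * (g \<bullet> u)) / \<alpha> - \<gamma>)) *\<^sub>R g"
      using \<open>\<alpha> \<noteq> 0\<close> by (simp add: MX gX algebra_simps diff_divide_distrib)
    finally show ?thesis by (simp add: coeff)
  qed
  then have "?N ** X = mat 1"
    by (simp add: matrix_eq matrix_vector_mul_assoc[symmetric])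
  then show ?thesis by (simp add: matrix_inv_unique X_def \<gamma>_def)
qed

lemma small_step_exists:
  fixes T B c :: real
  assumes "T < B"
  obtains t where "0 < t" "t < 1" "T + t * c < B"
proof -
  define t where "t = min (1/2) ((B - T) / (2 * (\<bar>c\<bar> + 1)))"
  have "0 < t" "t < 1" using assms by (simp_all add: t_def)
  have "t * c \<le> t * (\<bar>c\<bar> + 1)" using \<open>0 < t\<close> by (intro mult_left_mono) auto
  also have "\<dots> \<le> (B - T) / (2 * (\<bar>c\<bar> + 1)) * (\<bar>c\<bar> + 1)"
    by (intro mult_right_mono) (auto simp: t_def)
  also have "\<dots> = (B - T) / 2" by (simp add: field_simps)
  finally have "T + t * c < B" using assms by (simp add: field_simps)
  with \<open>0 < t\<close> \<open>t < 1\<close> show ?thesis using that by blast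
qed

text \<open>Sherman-Morrison gives \<open>tr N\<^sub>t\<^sup>-\<^sup>1 = (T - t c |u|\<^sup>2 / D\<^sub>t) / (1 - t)\<close> for
  \<open>N\<^sub>t = (1 - t) M + t c g g\<^sup>T\<close>, \<open>T = tr M\<^sup>-\<^sup>1\<close>, \<open>u = M\<^sup>-\<^sup>1 g\<close>, \<open>D\<^sub>t = 1 - t + t c g\<^sup>T u\<close>,
  and this is below \<open>T\<close> iff \<open>T D\<^sub>t < c |u|\<^sup>2\<close>, which holds for small \<open>t\<close>.\<close>
lemma trace_matrix_inv_decreases_toward_rank_one:
  fixes M :: "real^'n^'n"
  assumes sym: "transpose M = M" and pd: "pos_def M" and "0 \<le> c"
    and gain: "trace (matrix_inv M) < c * ((matrix_inv M *v g) \<bullet> (matrix_inv M *v g))"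
  obtains t where "0 < t" "t < 1"
    and "pos_def ((1 - t) *\<^sub>R M + (t * c) *\<^sub>R outer_prod g g)"
    and "trace (matrix_inv ((1 - t) *\<^sub>R M + (t * c) *\<^sub>R outer_prod g g)) < trace (matrix_inv M)"
proof -
  define P where "P = matrix_inv M"
  define T where "T = trace P"
  define u where "u = P *v g"
  define a where "a = g \<bullet> u"
  have "a \<ge> 0"
    using pos_def_imp_pos_semidef[OF pos_def_matrix_inv[OF pd]]
    unfolding a_def u_def P_def pos_semidef_def by blast
  obtain t where t: "0 < t" "t < 1" "T + t * (T * c * a - T) < c * (u \<bullet> u)"
    using small_step_exists gain unfolding T_def u_def P_def by metis
  define N where "N = (1 - t) *\<^sub>R M + (t * c) *\<^sub>R outer_prod g g"
  define D where "D = (1 - t) + (t * c) * a"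
  have "D > 0" using t \<open>a \<ge> 0\<close> \<open>0 \<le> c\<close> by (simp add: D_def add_pos_nonneg)
  have "pos_def N" unfolding pos_def_def
  proof (intro allI impI)
    fix y :: "real^'n" assume "y \<noteq> 0"
    have "y \<bullet> (N *v y) = (1 - t) * (y \<bullet> (M *v y)) + t * c * (g \<bullet> y)\<^sup>2"
      by (simp add: N_def matrix_vector_mult_add_rdistrib scaleR_matrix_vector_assoc[symmetric]
          outer_prod_mult_vec inner_add_right power2_eq_square inner_commute)
    moreover have "0 < y \<bullet> (M *v y)" using pd \<open>y \<noteq> 0\<close> unfolding pos_def_def by blast
    ultimately show "0 < y \<bullet> (N *v y)"
      using t \<open>0 \<le> c\<close> by (simp add: add_pos_nonneg)
  qed
  have "matrix_inv N = (1 / (1 - t)) *\<^sub>R (P - (t * c / D) *\<^sub>R outer_prod u u)"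
    using matrix_inv_rank_one_update[OF sym pos_def_imp_invertible[OF pd], of "1 - t" "t * c" g]
      t \<open>D > 0\<close> by (simp add: N_def D_def a_def u_def P_def)
  then have "trace (matrix_inv N) = (T - t * c * (u \<bullet> u) / D) / (1 - t)"
    by (simp add: trace_scaleR trace_sub trace_outer_prod T_def diff_divide_distrib)
  also have "\<dots> < T"
  proof -
    have "T * D < c * (u \<bullet> u)" using t(3) by (simp add: D_def algebra_simps)
    then have "t * T < t * c * (u \<bullet> u) / D"
      using \<open>D > 0\<close> t(1) by (simp add: field_simps)
    then show ?thesis using t(2) by (simp add: field_simps)
  qed
  finally show ?thesis using that t \<open>pos_def N\<close> unfolding N_def T_def P_def by blast
qed

lemma alloc_simplex_nonneg: "w \<in> alloc_simplex \<Longrightarrow> 0 \<le> w$j"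
  unfolding alloc_simplex_def by auto

lemma alloc_simplex_sum: "w \<in> alloc_simplex \<Longrightarrow> (\<Sum>j\<in>UNIV. w$j) = 1"
  unfolding alloc_simplex_def by auto

lemma alloc_simplex_le_1: "w \<in> alloc_simplex \<Longrightarrow> w$j \<le> 1"
  using member_le_sum[of j UNIV "\<lambda>j. w$j"] alloc_simplex_nonneg alloc_simplex_sum by fastforce

lemma convex_alloc_simplex: "convex alloc_simplex"
  unfolding convex_def alloc_simplex_def
  by (auto simp: sum.distrib sum_distrib_left[symmetric])

lemma compact_alloc_simplex: "compact (alloc_simplex :: (real^'m) set)"
proof -
  have "closed (alloc_simplex :: (real^'m) set)"
    unfolding alloc_simplex_def Collect_conj_eq
    by (intro closed_Int closed_Collect_all closed_Collect_le closed_Collect_eq continuous_intros)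
  moreover have "norm w \<le> 1" if "w \<in> alloc_simplex" for w :: "real^'m"
    using norm_le_l1_cart[of w] alloc_simplex_nonneg[OF that] alloc_simplex_sum[OF that] by simp
  then have "bounded (alloc_simplex :: (real^'m) set)"
    unfolding bounded_iff by blast
  ultimately show ?thesis using compact_eq_bounded_closed by blast
qed

definition shifted_alloc :: "real^'m \<Rightarrow> 'm \<Rightarrow> real \<Rightarrow> real^'m" where
  "shifted_alloc w i z = (\<chi> j. if j = i then z else (1 - z) / (1 - w $ i) * w $ j)"

lemma h_assoc_eq: "h_assoc q x nu w i z = h_obj q x nu (shifted_alloc w i z)"
  by (simp add: h_assoc_def shifted_alloc_def)

lemma shifted_alloc_in_simplex:
  assumes w: "w \<in> alloc_simplex" and "w$i < 1" and z: "0 \<le> z" "z \<le> 1"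
  shows "shifted_alloc w i z \<in> alloc_simplex"
  unfolding alloc_simplex_def
proof (intro CollectI conjI allI)
  fix j
  show "0 \<le> shifted_alloc w i z $ j"
    using z \<open>w$i < 1\<close> alloc_simplex_nonneg[OF w, of j] by (simp add: shifted_alloc_def)
next
  have "(\<Sum>j\<in>UNIV - {i}. shifted_alloc w i z $ j) = (1 - z) / (1 - w$i) * (\<Sum>j\<in>UNIV - {i}. w$j)"
    unfolding shifted_alloc_def sum_distrib_left by (rule sum.cong) auto
  also have "(\<Sum>j\<in>UNIV - {i}. w$j) = 1 - w$i"
    using alloc_simplex_sum[OF w] sum.remove[of UNIV i "\<lambda>j. w$j"] by simp
  moreover have "(\<Sum>j\<in>UNIV. shifted_alloc w i z $ j) =
      shifted_alloc w i z $ i + (\<Sum>j\<in>UNIV - {i}. shifted_alloc w i z $ j)"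
    by (rule sum.remove) auto
  ultimately show "(\<Sum>j\<in>UNIV. shifted_alloc w i z $ j) = 1"
    using \<open>w$i < 1\<close> by (simp add: shifted_alloc_def)
qed

lemma shifted_alloc_toward_vertex:
  assumes "w$i < 1"
  shows "shifted_alloc w i ((1 - t) * w$i + t) = (1 - t) *\<^sub>R w + t *\<^sub>R axis i 1"
proof -
  have "(1 - ((1 - t) * w$i + t)) / (1 - w$i) = 1 - t"
    using assms by (simp add: field_simps)
  then show ?thesis by (simp add: shifted_alloc_def vec_eq_iff axis_def)
qed

lemma shifted_alloc_at_coord: "w$i < 1 \<Longrightarrow> shifted_alloc w i (w$i) = w"
  using shifted_alloc_toward_vertex[of w i 0] by simp

section \<open>The information matrix\<close>

text \<open>\<open>design_gain q x nu A j\<close> is \<open>\<nu>\<^sub>j |A\<^sup>T q(x\<^sub>j)|\<^sup>2\<close>, the \<open>K\<^sub>j\<close> of the proof idea above.\<close>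
definition design_gain ::
    "(real^'d \<Rightarrow> real^'p) \<Rightarrow> ('m \<Rightarrow> real^'d) \<Rightarrow> ('m \<Rightarrow> real) \<Rightarrow> real^'p^'p \<Rightarrow> 'm \<Rightarrow> real"
  where
  "design_gain q x nu A j = nu j * (\<Sum>k\<in>UNIV. (q (x j) \<bullet> (A *v axis k 1))\<^sup>2)"

context
  fixes q :: "real^'d \<Rightarrow> real^'p" and x :: "'m::finite \<Rightarrow> real^'d" and nu :: "'m \<Rightarrow> real"
begin

lemma info_matrix_mult_vec:
  "info_matrix q x nu w *v y = (\<Sum>j\<in>UNIV. (w$j * nu j * (q (x j) \<bullet> y)) *\<^sub>R q (x j))"
proof -
  have "design_matrix q x *v y = (\<chi> j. q (x j) \<bullet> y)"
    by (simp add: vec_eq_iff design_matrix_def matrix_vector_mult_def inner_vec_def)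
  moreover have "weight_matrix nu w *v z = (\<chi> j. w$j * nu j * z$j)" for z
    by (simp add: vec_eq_iff weight_matrix_def matrix_vector_mult_def
        if_distrib[where f="\<lambda>a. a * _"] cong: if_cong)
  moreover have "transpose (design_matrix q x) *v u = (\<Sum>j\<in>UNIV. (u$j) *\<^sub>R q (x j))" for u
    by (simp add: vec_eq_iff design_matrix_def matrix_vector_mult_def transpose_def mult.commute)
  ultimately show ?thesis
    by (simp add: info_matrix_def matrix_vector_mul_assoc[symmetric])
qed

lemma info_matrix_quadratic_form:
  "y \<bullet> (info_matrix q x nu w *v y) = (\<Sum>j\<in>UNIV. w$j * nu j * (q (x j) \<bullet> y)\<^sup>2)"
  by (simp add: info_matrix_mult_vec inner_sum_right power2_eq_square inner_commute mult.assoc)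

lemma info_matrix_symmetric: "transpose (info_matrix q x nu w) = info_matrix q x nu w"
proof -
  have "transpose (weight_matrix nu w) = weight_matrix nu w"
    by (simp add: vec_eq_iff weight_matrix_def transpose_def)
  then show ?thesis
    by (simp add: info_matrix_def matrix_transpose_mul matrix_mul_assoc)
qed

lemma info_matrix_pos_semidef:
  assumes "\<And>j. 0 \<le> w$j" "\<And>j. 0 \<le> nu j"
  shows "pos_semidef (info_matrix q x nu w)"
  unfolding pos_semidef_def info_matrix_quadratic_form using assms by (auto intro!: sum_nonneg)

lemma info_matrix_pos_def_iff:
  assumes "\<And>j. 0 \<le> w$j" "\<And>j. 0 \<le> nu j"
  shows "pos_def (info_matrix q x nu w) \<longleftrightarrow> f_obj q x nu w > 0"
  using pos_def_det_pos invertible_det_nz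
    pos_semidef_invertible_imp_pos_def[OF info_matrix_symmetric info_matrix_pos_semidef[OF assms]]
  unfolding f_obj_def by force

lemma h_obj_pos_def:
  assumes "pos_def (info_matrix q x nu w)"
  shows "h_obj q x nu w = inverse (trace (matrix_inv (info_matrix q x nu w)))"
  using pos_def_det_pos[OF assms] by (simp add: h_obj_def f_obj_def)

lemma trace_form_info_matrix:
  "trace_form (info_matrix q x nu w) A = (\<Sum>j\<in>UNIV. w$j * design_gain q x nu A j)"
  unfolding trace_form_def design_gain_def info_matrix_quadratic_form
  by (subst sum.swap) (simp add: sum_distrib_left mult.assoc)

lemma design_gain_nonneg: "0 \<le> nu j \<Longrightarrow> 0 \<le> design_gain q x nu A j"
  unfolding design_gain_def by (simp add: sum_nonneg)

lemma h_obj_le_trace_form: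
  assumes "\<And>j. 0 \<le> w$j" "\<And>j. 0 \<le> nu j" "trace A = 1"
  shows "h_obj q x nu w \<le> trace_form (info_matrix q x nu w) A"
proof (cases "pos_def (info_matrix q x nu w)")
  case True
  then show ?thesis
    using inverse_trace_matrix_inv_le_trace_form[OF info_matrix_symmetric _ assms(3)]
    by (simp add: h_obj_pos_def)
next
  case False
  have "0 \<le> trace_form (info_matrix q x nu w) A"
    unfolding trace_form_info_matrix
    using assms by (intro sum_nonneg mult_nonneg_nonneg design_gain_nonneg) auto
  then show ?thesis
    using False info_matrix_pos_def_iff[OF assms(1,2)] by (simp add: h_obj_def)
qed

lemma h_obj_attained_by_trace_form:
  assumes "\<And>j. 0 \<le> w$j" "\<And>j. 0 \<le> nu j"
  obtains A where "trace A = 1" "trace_form (info_matrix q x nu w) A = h_obj q x nu w"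
proof (cases "pos_def (info_matrix q x nu w)")
  case True
  then show ?thesis
    using that trace_form_normalized_inverse[OF True] by (simp add: h_obj_pos_def)
next
  case False
  then have "\<not> invertible (info_matrix q x nu w)"
    using pos_semidef_invertible_imp_pos_def[OF info_matrix_symmetric
        info_matrix_pos_semidef[OF assms]] by blast
  then show ?thesis
    using that singular_trace_form_zero False info_matrix_pos_def_iff[OF assms]
    by (metis h_obj_def)
qed

lemma h_obj_attained_inf:
  assumes "\<And>j. 0 \<le> nu j"
  shows "attained_inf_on alloc_simplex {A. trace A = 1}
    (\<lambda>A w. trace_form (info_matrix q x nu w) A) (h_obj q x nu)"
  unfolding attained_inf_on_def
proof (rule ballI, rule conjI)
  fix w :: "real^'m" assume "w \<in> alloc_simplex"
  then have w: "\<And>j. 0 \<le> w$j" using alloc_simplex_nonneg by blast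
  show "\<forall>A\<in>{A. trace A = 1}. h_obj q x nu w \<le> trace_form (info_matrix q x nu w) A"
    using h_obj_le_trace_form[OF w assms] by blast
  obtain A where "trace A = 1" "trace_form (info_matrix q x nu w) A = h_obj q x nu w"
    using h_obj_attained_by_trace_form[OF w assms] by blast
  then show "\<exists>A\<in>{A. trace A = 1}. trace_form (info_matrix q x nu w) A = h_obj q x nu w" by blast
qed

lemma concave_on_h_obj:
  assumes "\<And>j. 0 \<le> nu j"
  shows "concave_on alloc_simplex (h_obj q x nu)"
proof (rule concave_on_attained_inf[OF convex_alloc_simplex h_obj_attained_inf[OF assms]])
  fix A :: "real^'p^'p"
  show "concave_on alloc_simplex (\<lambda>w. trace_form (info_matrix q x nu w) A)"
    unfolding concave_on_iff trace_form_info_matrix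
    by (simp add: convex_alloc_simplex algebra_simps sum.distrib sum_distrib_left)
qed

lemma convex_A_optimal:
  assumes "\<And>j. 0 \<le> nu j"
  shows "convex {w. A_optimal q x nu w}"
  using convex_maximizers[OF concave_on_h_obj[OF assms]] by (simp add: A_optimal_def)

lemma A_optimal_exists:
  assumes "\<And>j. 0 \<le> nu j"
  shows "\<exists>w. A_optimal q x nu w"
proof -
  have "(\<chi> j. 1 / real CARD('m)) \<in> (alloc_simplex :: (real^'m) set)"
    unfolding alloc_simplex_def by simp
  then have "(alloc_simplex :: (real^'m) set) \<noteq> {}" by blast
  moreover have "continuous_on alloc_simplex (\<lambda>w. trace_form (info_matrix q x nu w) A)" for A
    unfolding trace_form_info_matrix by (intro continuous_intros)
  ultimately obtain w where
    "w \<in> alloc_simplex" "\<And>v. v \<in> alloc_simplex \<Longrightarrow> h_obj q x nu v \<le> h_obj q x nu w"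
    using attained_inf_of_continuous_attains_sup[OF compact_alloc_simplex _ h_obj_attained_inf[OF assms]]
    by blast
  then show ?thesis unfolding A_optimal_def by blast
qed

text \<open>A design supported on a single point has rank at most one, so when \<open>p \<ge> 2\<close> a
  nonsingular information matrix forces every weight below \<open>1\<close>.\<close>
lemma alloc_simplex_coord_lt_1:
  assumes w: "w \<in> alloc_simplex" and f: "f_obj q x nu w > 0" and p: "CARD('p) \<ge> 2"
  shows "w$i < 1"
proof (rule ccontr)
  assume "\<not> w$i < 1"
  then have "w$i = 1" using alloc_simplex_le_1[OF w] by (meson linorder_not_less order_antisym)
  then have "(\<Sum>j\<in>UNIV - {i}. w$j) = 0"
    using alloc_simplex_sum[OF w] sum.remove[of UNIV i "\<lambda>j. w$j"] by simp
  then have wj: "w$j = 0" if "j \<noteq> i" for j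
    using sum_nonneg_eq_0_iff[of "UNIV - {i}" "\<lambda>j. w$j"] alloc_simplex_nonneg[OF w] that by auto
  have "2 \<le> DIM(real^'p)" using p by simp
  then obtain y :: "real^'p" where y: "y \<noteq> 0" "orthogonal (q (x i)) y"
    using orthogonal_to_vector_exists by blast
  have "info_matrix q x nu w *v y = 0"
    unfolding info_matrix_mult_vec
    by (rule sum.neutral) (metis wj y(2) orthogonal_def mult_eq_0_iff scaleR_eq_0_iff)
  then have "\<not> invertible (info_matrix q x nu w)"
    using y(1) by (metis inj_matrix_vector_mult injD matrix_vector_mult_0_right)
  then show False using f invertible_det_nz by (force simp: f_obj_def)
qed

lemma info_matrix_toward_vertex:
  "info_matrix q x nu ((1 - t) *\<^sub>R w + t *\<^sub>R axis i 1) =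
    (1 - t) *\<^sub>R info_matrix q x nu w + (t * nu i) *\<^sub>R outer_prod (q (x i)) (q (x i))"
proof -
  have "info_matrix q x nu ((1 - t) *\<^sub>R w + t *\<^sub>R axis i 1) *v y =
     ((1 - t) *\<^sub>R info_matrix q x nu w + (t * nu i) *\<^sub>R outer_prod (q (x i)) (q (x i))) *v y" for y
  proof -
    have "info_matrix q x nu ((1 - t) *\<^sub>R w + t *\<^sub>R axis i 1) *v y =
       (\<Sum>j\<in>UNIV. ((1 - t) * (w$j * nu j * (q (x j) \<bullet> y))) *\<^sub>R q (x j)) +
       (\<Sum>j\<in>UNIV. (if j = i then t * nu i * (q (x i) \<bullet> y) else 0) *\<^sub>R q (x j))"
      unfolding info_matrix_mult_vec sum.distrib[symmetric]
      by (rule sum.cong) (auto simp: axis_def algebra_simps)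
    then show ?thesis
      by (simp add: matrix_vector_mult_add_rdistrib scaleR_matrix_vector_assoc[symmetric]
          outer_prod_mult_vec info_matrix_mult_vec scaleR_sum_right inner_commute
          if_distrib[where f="\<lambda>c. c *\<^sub>R _"] cong: if_cong)
  qed
  then show ?thesis by (simp add: matrix_eq)
qed

lemma design_gain_normalized_inverse:
  fixes M :: "real^'p^'p"
  assumes "transpose M = M" "invertible M"
  shows "design_gain q x nu (normalized_inverse M) j =
    nu j * ((matrix_inv M *v q (x j)) \<bullet> (matrix_inv M *v q (x j))) / (trace (matrix_inv M))\<^sup>2"
proof -
  have "q (x j) \<bullet> (normalized_inverse M *v axis k 1) =
      (matrix_inv M *v q (x j)) $ k / trace (matrix_inv M)" for k
    using symmetric_matrix_inner[OF matrix_inv_symmetric[OF assms], of "q (x j)" "axis k 1"]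
    by (simp add: normalized_inverse_def scaleR_matrix_vector_assoc[symmetric] inner_axis)
  then show ?thesis
    by (simp add: design_gain_def inner_vec_def power_divide power2_eq_square
        flip: sum_divide_distrib)
qed

lemma h_obj_increases_toward_vertex:
  assumes nu: "\<And>j. 0 \<le> nu j" and pd: "pos_def (info_matrix q x nu w)"
    and gain: "h_obj q x nu w < design_gain q x nu (normalized_inverse (info_matrix q x nu w)) i"
  obtains t where "0 < t" "t < 1" "h_obj q x nu w < h_obj q x nu ((1 - t) *\<^sub>R w + t *\<^sub>R axis i 1)"
proof -
  define M where "M = info_matrix q x nu w"
  define T where "T = trace (matrix_inv M)"
  define u where "u = matrix_inv M *v q (x i)"
  have "T > 0"
    using pos_def_trace_pos[OF pos_def_matrix_inv] pd by (simp add: T_def M_def)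
  have "inverse T < nu i * (u \<bullet> u) / T\<^sup>2"
    using gain h_obj_pos_def[OF pd]
    by (simp add: T_def M_def u_def
        design_gain_normalized_inverse[OF info_matrix_symmetric pos_def_imp_invertible[OF pd]])
  then have "T < nu i * (u \<bullet> u)"
    using \<open>T > 0\<close> by (simp add: field_simps power2_eq_square)
  then obtain t where t: "0 < t" "t < 1"
    and "pos_def ((1 - t) *\<^sub>R M + (t * nu i) *\<^sub>R outer_prod (q (x i)) (q (x i)))"
    and "trace (matrix_inv ((1 - t) *\<^sub>R M + (t * nu i) *\<^sub>R outer_prod (q (x i)) (q (x i)))) < T"
    using trace_matrix_inv_decreases_toward_rank_one[OF info_matrix_symmetric[of w] pd nu]
    unfolding T_def u_def M_def by blast
  then have pdv: "pos_def (info_matrix q x nu ((1 - t) *\<^sub>R w + t *\<^sub>R axis i 1))"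
    and trv: "trace (matrix_inv (info_matrix q x nu ((1 - t) *\<^sub>R w + t *\<^sub>R axis i 1))) < T"
    by (simp_all add: info_matrix_toward_vertex M_def)
  have "h_obj q x nu w < h_obj q x nu ((1 - t) *\<^sub>R w + t *\<^sub>R axis i 1)"
    using less_imp_inverse_less[OF trv pos_def_trace_pos[OF pos_def_matrix_inv[OF pdv]]]
    by (simp add: h_obj_pos_def[OF pd] h_obj_pos_def[OF pdv] T_def M_def)
  then show ?thesis using that t by blast
qed

lemma design_gain_le_h_obj_if_coordinatewise_optimal:
  assumes nu: "\<And>j. 0 \<le> nu j" and pd: "pos_def (info_matrix q x nu w)" and "0 \<le> w$i" "w$i < 1"
    and opt: "\<forall>z\<in>{0..1}. h_assoc q x nu w i z \<le> h_assoc q x nu w i (w$i)"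
  shows "design_gain q x nu (normalized_inverse (info_matrix q x nu w)) i \<le> h_obj q x nu w"
proof (rule ccontr)
  assume "\<not> ?thesis"
  then have "h_obj q x nu w < design_gain q x nu (normalized_inverse (info_matrix q x nu w)) i"
    by simp
  then obtain t where t: "0 < t" "t < 1"
    and less: "h_obj q x nu w < h_obj q x nu ((1 - t) *\<^sub>R w + t *\<^sub>R axis i 1)"
    using h_obj_increases_toward_vertex[OF nu pd] by blast
  have "0 \<le> (1 - t) * w$i" "(1 - t) * w$i \<le> 1 - t"
    using t \<open>0 \<le> w$i\<close> \<open>w$i < 1\<close> mult_left_le[of "w$i" "1 - t"] by simp_all
  then have "(1 - t) * w$i + t \<in> {0..1}" unfolding atLeastAtMost_iff using t by linarith
  then have "h_assoc q x nu w i ((1 - t) * w$i + t) \<le> h_assoc q x nu w i (w$i)"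
    using opt by blast
  then show False
    using less by (simp add: h_assoc_eq shifted_alloc_toward_vertex[OF \<open>w$i < 1\<close>]
        shifted_alloc_at_coord[OF \<open>w$i < 1\<close>])
qed

lemma A_optimal_if_design_gain_le:
  assumes nu: "\<And>j. 0 \<le> nu j" and w: "w \<in> alloc_simplex" and pd: "pos_def (info_matrix q x nu w)"
    and gain:
      "\<And>j. design_gain q x nu (normalized_inverse (info_matrix q x nu w)) j \<le> h_obj q x nu w"
  shows "A_optimal q x nu w"
  unfolding A_optimal_def
proof (intro conjI ballI w)
  fix v :: "real^'m" assume v: "v \<in> alloc_simplex"
  let ?A = "normalized_inverse (info_matrix q x nu w)"
  have "h_obj q x nu v \<le> trace_form (info_matrix q x nu v) ?A"
    using h_obj_le_trace_form alloc_simplex_nonneg[OF v] nu trace_form_normalized_inverse(1)[OF pd]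
    by blast
  also have "\<dots> = (\<Sum>j\<in>UNIV. v$j * design_gain q x nu ?A j)"
    by (rule trace_form_info_matrix)
  also have "\<dots> \<le> (\<Sum>j\<in>UNIV. v$j * h_obj q x nu w)"
    by (intro sum_mono mult_left_mono gain alloc_simplex_nonneg[OF v])
  also have "\<dots> = h_obj q x nu w"
    using alloc_simplex_sum[OF v] by (simp flip: sum_distrib_right)
  finally show "h_obj q x nu v \<le> h_obj q x nu w" .
qed

lemma h_assoc_le_if_A_optimal:
  assumes opt: "A_optimal q x nu w" and "w$i < 1" and z: "z \<in> {0..1}"
  shows "h_assoc q x nu w i z \<le> h_assoc q x nu w i (w$i)"
proof -
  have "shifted_alloc w i z \<in> alloc_simplex"
    using opt \<open>w$i < 1\<close> z shifted_alloc_in_simplex unfolding A_optimal_def by auto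
  then show ?thesis
    using opt by (simp add: A_optimal_def h_assoc_eq shifted_alloc_at_coord[OF \<open>w$i < 1\<close>])
qed

end

theorem theorem3:
  fixes q :: "real^'d \<Rightarrow> real^'p"
    and x :: "'m::finite \<Rightarrow> real^'d"
    and nu :: "'m \<Rightarrow> real"
  assumes distinct_points: "inj x"
    and nu_nonneg: "\<And>i. 0 \<le> nu i"
    and m_gt_p: "CARD('m) > CARD('p)"
    and p_ge_2: "CARD('p) \<ge> 2"
  shows "(\<exists>w. A_optimal q x nu w)
       \<and> convex {w. A_optimal q x nu w}
       \<and> (\<forall>w. w \<in> alloc_simplex \<and> f_obj q x nu w > 0 \<longrightarrow>
             (A_optimal q x nu w \<longleftrightarrow>
              (\<forall>i. \<forall>z\<in>{0..1}. h_assoc q x nu w i z \<le> h_assoc q x nu w i (w $ i))))"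
proof (intro conjI allI impI)
  show "\<exists>w. A_optimal q x nu w" using A_optimal_exists nu_nonneg by blast
  show "convex {w. A_optimal q x nu w}" using convex_A_optimal nu_nonneg by blast
next
  fix w assume "w \<in> alloc_simplex \<and> f_obj q x nu w > 0"
  then have w: "w \<in> alloc_simplex" and "f_obj q x nu w > 0" by auto
  then have lt1: "w$i < 1" for i using alloc_simplex_coord_lt_1 p_ge_2 by blast
  have pd: "pos_def (info_matrix q x nu w)"
    using info_matrix_pos_def_iff alloc_simplex_nonneg[OF w] nu_nonneg \<open>f_obj q x nu w > 0\<close> by blast
  show "A_optimal q x nu w \<longleftrightarrow>
      (\<forall>i. \<forall>z\<in>{0..1}. h_assoc q x nu w i z \<le> h_assoc q x nu w i (w $ i))"
    using h_assoc_le_if_A_optimal[OF _ lt1] A_optimal_if_design_gain_le[OF nu_nonneg w pd]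
      design_gain_le_h_obj_if_coordinatewise_optimal[OF nu_nonneg pd alloc_simplex_nonneg[OF w] lt1]
    by blast
qed

end
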